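(* Let $X$ be an irreducible homogeneous Markov chain on a finite state space $\overline{F}$ with transition matrix $r$ and unique stationary distribution $\eta=(\eta_j:j\in\overline{F})$, and let $\boldsymbol{\alpha}=(\alpha_j:j\in\overline{F})\in[0,1]^{\overline{F}}$ be non-zero. Let $X^{(\boldsymbol{\alpha})}$ be the Markov chain obtained from $X$ by randomized skipping with acceptance probabilities $\boldsymbol{\alpha}$, with transition matrix $r^{(\boldsymbol{\alpha})}=(I-rI_{(1-\boldsymbol{\alpha})})^{-1}rI_{\boldsymbol{\alpha}}$. Then $X^{(\boldsymbol{\alpha})}$ has the unique stationary distribution \[ \eta^{(\boldsymbol{\alpha})}=\big(C^{(\boldsymbol{\alpha})}\big)^{-1}(\eta_j\alpha_j:j\in\overline{F}),\qquad C^{(\boldsymbol{\alpha})}=\sum_{j\in\overline{F}}\eta_j\alpha_j, \] and $\eta^{(\boldsymbol{\alpha})}$ has support $\overline{F}\setminus B(\boldsymbol{\alpha})$, where $B(\boldsymbol{\alpha})=\{j\in\overline{F}:\alpha_j=0\}$.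
   Context: $I_{\boldsymbol{\alpha}}$ and $I_{(1-\boldsymbol{\alpha})}$ are the diagonal matrices indexed by $\overline{F}$ with diagonal entries $\alpha_j$, resp. $1-\alpha_j$; $I$ is the identity matrix. Randomized skipping: from current state $i$ a destination $j$ is proposed with probability $r(i,j)$ and accepted, independently of the past given $j$, with probability $\alpha_j$; if accepted the chain moves to $j$; if rejected, the walker makes an imaginary jump to $j$ taking no time and immediately proposes a new destination from row $j$ of $r$, which is again accepted with the corresponding acceptance probability, and so on until a proposal is accepted. *)

theory Defs
  imports "HOL-Analysis.Analysis"
begin

text \<open>Finite state space = finite type 'n; transition matrices are real^'n^'n,
  with r $ i $ j the probability of moving from i to j.\<close>

definition stochastic_matrix :: "real^'n^'n \<Rightarrow> bool" where
  "stochastic_matrix r \<longleftrightarrow>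
     (\<forall>i j. 0 \<le> r $ i $ j) \<and> (\<forall>i. (\<Sum>j\<in>UNIV. r $ i $ j) = 1)"

definition irreducible_chain :: "real^'n^'n \<Rightarrow> bool" where
  "irreducible_chain r \<longleftrightarrow> (\<forall>i j. (i, j) \<in> {(a, b). 0 < r $ a $ b}\<^sup>+)"

definition prob_vector :: "real^'n \<Rightarrow> bool" where
  "prob_vector p \<longleftrightarrow> (\<forall>j. 0 \<le> p $ j) \<and> (\<Sum>j\<in>UNIV. p $ j) = 1"

definition stationary_dist :: "real^'n^'n \<Rightarrow> real^'n \<Rightarrow> bool" where
  "stationary_dist r p \<longleftrightarrow> prob_vector p \<and> p v* r = p"

definition diag_mat :: "real^'n \<Rightarrow> real^'n^'n" where
  "diag_mat d = (\<chi> i j. if i = j then d $ i else 0)"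

definition skip_matrix :: "real^'n^'n \<Rightarrow> real^'n \<Rightarrow> real^'n^'n" where
  "skip_matrix r \<alpha> =
     matrix_inv (mat 1 - r ** diag_mat (\<chi> j. 1 - \<alpha> $ j)) ** r ** diag_mat \<alpha>"

end

theory Submission
  imports Defs
begin

text \<open>Write \<open>D\<^sub>\<beta>\<close> for \<open>diag_mat \<beta>\<close> and \<open>M = I - r D\<^sub>1\<^sub>-\<^sub>\<alpha>\<close>.  For a row vector \<open>q\<close>
  one has \<open>q M = q - (q r) D\<^sub>1\<^sub>-\<^sub>\<alpha>\<close>, so if \<open>q r = q\<close> then \<open>q M = q D\<^sub>\<alpha>\<close>; consequently
  \<open>p = q D\<^sub>\<alpha>\<close> is invariant for \<open>M\<^sup>-\<^sup>1 r D\<^sub>\<alpha>\<close>, and conversely every invariant \<open>p\<close> of the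
  skipped chain arises this way from \<open>q = p M\<^sup>-\<^sup>1\<close>.  The \<open>r\<close>-invariant vectors are the
  multiples of \<open>\<eta>\<close>, so the invariant vectors of the skipped chain are the multiples of
  \<open>(\<eta>\<^sub>j \<alpha>\<^sub>j)\<^sub>j\<close>.  Invertibility of \<open>M\<close> is a maximum principle: a nonzero solution of
  \<open>x = r D\<^sub>1\<^sub>-\<^sub>\<alpha> x\<close> would, by irreducibility, attain its maximal modulus everywhere and
  force \<open>\<alpha> = 0\<close>.  Positivity of \<open>\<eta>\<close> gives the support.\<close>

lemma vector_matrix_mult_diag_mat_nth [simp]: "(x v* diag_mat d) $ j = x $ j * d $ j"
  by (simp add: vector_matrix_mult_def diag_mat_def if_distrib cong: if_cong)

lemma diag_mat_mult_vector_nth [simp]: "(diag_mat d *v x) $ i = d $ i * x $ i"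
  by (simp add: matrix_vector_mult_def diag_mat_def if_distrib[where f="\<lambda>a. a * _"] cong: if_cong)

lemma vector_matrix_mult_nth: "(x v* r) $ j = (\<Sum>i\<in>UNIV. x $ i * r $ i $ j)"
  by (simp add: vector_matrix_mult_def)

lemma matrix_vector_mult_nth: "(r *v x) $ i = (\<Sum>j\<in>UNIV. r $ i $ j * x $ j)"
  by (simp add: matrix_vector_mult_def)

lemma invertible_matrix_inv:
  fixes A :: "'a::field^'n^'n"
  assumes "invertible A"
  shows "A ** matrix_inv A = mat 1" and "matrix_inv A ** A = mat 1"
proof -
  have "A ** matrix_inv A = mat 1 \<and> matrix_inv A ** A = mat 1"
    unfolding matrix_inv_def by (rule someI_ex) (use assms in \<open>simp add: invertible_def\<close>)
  then show "A ** matrix_inv A = mat 1" and "matrix_inv A ** A = mat 1" by auto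
qed

lemma irreducible_chain_induct:
  assumes "irreducible_chain r" and "P i"
    and step: "\<And>a b. P a \<Longrightarrow> 0 < r $ a $ b \<Longrightarrow> P b"
  shows "P j"
proof -
  have "(i, j) \<in> {(a, b). 0 < r $ a $ b}\<^sup>+"
    using assms(1) unfolding irreducible_chain_def by blast
  then show ?thesis
    by (induction rule: trancl_induct) (use assms(2) step in auto)
qed

lemma irreducible_chain_ex_predecessor:
  assumes "irreducible_chain r"
  obtains i where "0 < r $ i $ j"
proof -
  have "(j, j) \<in> {(a, b). 0 < r $ a $ b}\<^sup>+"
    using assms unfolding irreducible_chain_def by blast
  then show ?thesis using that by (auto dest: tranclD2)
qed

lemma stochastic_matrixD:
  assumes "stochastic_matrix r"
  shows "0 \<le> r $ i $ j" and "(\<Sum>j\<in>UNIV. r $ i $ j) = 1"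
  using assms unfolding stochastic_matrix_def by auto

lemma stationary_dist_pos:
  assumes st: "stochastic_matrix r" and irr: "irreducible_chain r"
    and sd: "stationary_dist r \<eta>"
  shows "0 < \<eta> $ j"
proof -
  have nonneg: "\<And>j. 0 \<le> \<eta> $ j" and sum1: "(\<Sum>j\<in>UNIV. \<eta> $ j) = 1"
    and inv: "\<eta> v* r = \<eta>"
    using sd unfolding stationary_dist_def prob_vector_def by auto
  have "\<exists>i. 0 < \<eta> $ i"
  proof (rule ccontr)
    assume "\<nexists>i. 0 < \<eta> $ i"
    then have "(\<Sum>j\<in>UNIV. \<eta> $ j) \<le> 0" by (simp add: sum_nonpos not_less)
    with sum1 show False by simp
  qed
  then obtain i where "0 < \<eta> $ i" by blast
  then show ?thesis
  proof (rule irreducible_chain_induct[OF irr])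
    fix a b assume "0 < \<eta> $ a" "0 < r $ a $ b"
    then have "0 < \<eta> $ a * r $ a $ b" by simp
    also have "\<dots> \<le> (\<Sum>i\<in>UNIV. \<eta> $ i * r $ i $ b)"
      by (rule member_le_sum) (simp_all add: nonneg stochastic_matrixD(1)[OF st])
    also have "\<dots> = \<eta> $ b" using inv by (simp add: vector_matrix_mult_nth[symmetric])
    finally show "0 < \<eta> $ b" .
  qed
qed

lemma fixpoint_max_modulus_propagates:
  assumes st: "stochastic_matrix r" and w: "\<forall>j. 0 \<le> w $ j \<and> w $ j \<le> 1"
    and fixpoint: "x = r *v (diag_mat w *v x)"
    and bound: "\<forall>j. \<bar>x $ j\<bar> \<le> m" and "0 < m" and "\<bar>x $ a\<bar> = m" and rab: "0 < r $ a $ b"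
  shows "\<bar>x $ b\<bar> = m \<and> w $ b = 1"
proof (rule ccontr)
  have wx_le: "w $ j * \<bar>x $ j\<bar> \<le> \<bar>x $ j\<bar>" for j
    using w by (simp add: mult_left_le_one_le)
  have le: "w $ j * \<bar>x $ j\<bar> \<le> m" for j
    using wx_le[of j] bound by (meson order_trans)
  assume neg: "\<not> (\<bar>x $ b\<bar> = m \<and> w $ b = 1)"
  have lt: "w $ b * \<bar>x $ b\<bar> < m"
  proof (rule ccontr)
    assume "\<not> w $ b * \<bar>x $ b\<bar> < m"
    then have eq: "w $ b * \<bar>x $ b\<bar> = m" using le[of b] by simp
    then have "\<bar>x $ b\<bar> = m" using wx_le[of b] bound by (metis order_antisym)
    with eq \<open>0 < m\<close> have "w $ b = 1" by simp
    with neg \<open>\<bar>x $ b\<bar> = m\<close> show False by simp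
  qed
  have "m = \<bar>\<Sum>j\<in>UNIV. r $ a $ j * (w $ j * x $ j)\<bar>"
    using arg_cong[OF fixpoint, of "\<lambda>v. \<bar>v $ a\<bar>"] \<open>\<bar>x $ a\<bar> = m\<close>
    by (simp add: matrix_vector_mult_nth[of r])
  also have "\<dots> \<le> (\<Sum>j\<in>UNIV. r $ a $ j * (w $ j * \<bar>x $ j\<bar>))"
    using sum_abs[of "\<lambda>j. r $ a $ j * (w $ j * x $ j)" UNIV] w stochastic_matrixD(1)[OF st]
    by (simp add: abs_mult)
  also have "\<dots> < (\<Sum>j\<in>UNIV. r $ a $ j * m)"
  proof (rule sum_strict_mono_ex1)
    show "\<forall>j\<in>UNIV. r $ a $ j * (w $ j * \<bar>x $ j\<bar>) \<le> r $ a $ j * m"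
      using le stochastic_matrixD(1)[OF st] by (simp add: mult_left_mono)
    show "\<exists>j\<in>UNIV. r $ a $ j * (w $ j * \<bar>x $ j\<bar>) < r $ a $ j * m"
      using mult_strict_left_mono[OF lt rab] by blast
  qed simp
  also have "\<dots> = m" by (simp add: sum_distrib_right[symmetric] stochastic_matrixD(2)[OF st])
  finally show False by simp
qed

lemma invertible_id_minus_mult_diag_mat:
  assumes st: "stochastic_matrix r" and irr: "irreducible_chain r"
    and w: "\<forall>j. 0 \<le> w $ j \<and> w $ j \<le> 1" and "w $ k < 1"
  shows "invertible (mat 1 - r ** diag_mat w)"
  unfolding invertible_left_inverse matrix_left_invertible_ker
proof (intro allI impI)
  fix x assume "(mat 1 - r ** diag_mat w) *v x = 0"
  then have fixpoint: "x = r *v (diag_mat w *v x)"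
    by (simp add: matrix_vector_mult_diff_rdistrib matrix_vector_mul_assoc)
  define m where "m = Max (range (\<lambda>j. \<bar>x $ j\<bar>))"
  have bound: "\<forall>j. \<bar>x $ j\<bar> \<le> m" unfolding m_def by (auto intro: Max_ge)
  have "m \<in> range (\<lambda>j. \<bar>x $ j\<bar>)" unfolding m_def by (rule Max_in) auto
  then obtain a where a: "m = \<bar>x $ a\<bar>" by (rule rangeE)
  show "x = 0"
  proof (rule ccontr)
    assume "x \<noteq> 0"
    then obtain i where "x $ i \<noteq> 0" by (auto simp: vec_eq_iff)
    then have "0 < m" using bound[rule_format, of i] by linarith
    have all_max: "\<bar>x $ j\<bar> = m" for j
    proof (rule irreducible_chain_induct[OF irr, where P = "\<lambda>j. \<bar>x $ j\<bar> = m"])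
      show "\<bar>x $ a\<bar> = m" using a by simp
      show "\<bar>x $ c\<bar> = m" if "\<bar>x $ b\<bar> = m" and "0 < r $ b $ c" for b c
        using fixpoint_max_modulus_propagates[OF st w fixpoint bound \<open>0 < m\<close> that] by simp
    qed
    obtain i where "0 < r $ i $ k" using irreducible_chain_ex_predecessor[OF irr] by blast
    then have "w $ k = 1"
      using fixpoint_max_modulus_propagates[OF st w fixpoint bound \<open>0 < m\<close> all_max] by simp
    with \<open>w $ k < 1\<close> show False by simp
  qed
qed

lemma invariant_imp_abs_invariant:
  assumes st: "stochastic_matrix r" and inv: "q v* r = q"
  shows "(\<chi> j. \<bar>q $ j\<bar>) v* r = (\<chi> j. \<bar>q $ j\<bar>)"
proof -
  define a where "a = (\<chi> j. \<bar>q $ j\<bar>)"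
  have le: "a $ j \<le> (a v* r) $ j" for j
  proof -
    have "a $ j = \<bar>\<Sum>i\<in>UNIV. q $ i * r $ i $ j\<bar>"
      using inv by (simp add: a_def vector_matrix_mult_nth[symmetric])
    also have "\<dots> \<le> (\<Sum>i\<in>UNIV. \<bar>q $ i * r $ i $ j\<bar>)" by (rule sum_abs)
    also have "\<dots> = (a v* r) $ j"
      by (simp add: vector_matrix_mult_nth a_def abs_mult stochastic_matrixD(1)[OF st])
    finally show ?thesis .
  qed
  text \<open>A stochastic matrix preserves total mass, so the inequalities are equalities.\<close>
  have "(\<Sum>j\<in>UNIV. (a v* r) $ j) = (\<Sum>i\<in>UNIV. \<Sum>j\<in>UNIV. a $ i * r $ i $ j)"
    unfolding vector_matrix_mult_nth by (rule sum.swap)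
  also have "\<dots> = (\<Sum>i\<in>UNIV. a $ i)"
    by (simp add: sum_distrib_left[symmetric] stochastic_matrixD(2)[OF st])
  finally have "(\<Sum>j\<in>UNIV. (a v* r) $ j - a $ j) = 0" by (simp add: sum_subtractf)
  then have "\<forall>j. (a v* r) $ j - a $ j = 0"
    using sum_nonneg_eq_0_iff[of UNIV "\<lambda>j. (a v* r) $ j - a $ j"] le by simp
  then show ?thesis by (simp add: vec_eq_iff a_def)
qed

lemma nonneg_invariant_eq_scaleR_stationary:
  assumes uniq: "\<forall>p. stationary_dist r p \<longrightarrow> p = \<eta>"
    and nonneg: "\<And>j. 0 \<le> v $ j" and inv: "v v* r = v"
  shows "v = (\<Sum>j\<in>UNIV. v $ j) *s \<eta>"
proof (cases "(\<Sum>j\<in>UNIV. v $ j) = 0")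
  case True
  then show ?thesis using sum_nonneg_eq_0_iff[of UNIV "\<lambda>j. v $ j"] nonneg
    by (simp add: vec_eq_iff)
next
  case False
  define s where "s = (\<Sum>j\<in>UNIV. v $ j)"
  have "0 < s" using False nonneg unfolding s_def by (simp add: sum_nonneg order_le_neq_trans)
  have "stationary_dist r ((1 / s) *s v)"
    unfolding stationary_dist_def prob_vector_def
    using \<open>0 < s\<close> nonneg
    by (simp add: scalar_vector_matrix_assoc inv sum_divide_distrib[symmetric] s_def[symmetric])
  then have "(1 / s) *s v = \<eta>" using uniq by blast
  then have "\<eta> $ j = v $ j / s" for j by auto
  then have "v $ j = s * \<eta> $ j" for j using \<open>0 < s\<close> by simp
  then show ?thesis unfolding s_def[symmetric] by (simp add: vec_eq_iff)
qed

lemma invariant_eq_scaleR_stationary: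
  assumes st: "stochastic_matrix r"
    and uniq: "\<forall>p. stationary_dist r p \<longrightarrow> p = \<eta>"
    and inv: "q v* r = q"
  obtains t where "q = t *s \<eta>"
proof -
  define a where "a = (\<chi> j. \<bar>q $ j\<bar>)"
  have a_inv: "a v* r = a"
    unfolding a_def by (rule invariant_imp_abs_invariant[OF st inv])
  text \<open>Both \<open>\<bar>q\<bar>\<close> and \<open>q + \<bar>q\<bar>\<close> are nonnegative and invariant.\<close>
  obtain s where s: "a = s *s \<eta>"
    using nonneg_invariant_eq_scaleR_stationary[OF uniq _ a_inv] by (auto simp: a_def)
  obtain s' where s': "q + a = s' *s \<eta>"
    using nonneg_invariant_eq_scaleR_stationary[OF uniq, of "q + a"] a_inv inv
    by (auto simp: a_def vector_matrix_left_distrib)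
  have "q = (s' - s) *s \<eta>"
    unfolding vec_eq_iff
  proof
    fix j
    have "q $ j + a $ j = s' * \<eta> $ j" and "a $ j = s * \<eta> $ j"
      using s s' by (simp_all add: vec_eq_iff)
    then show "q $ j = ((s' - s) *s \<eta>) $ j" by (simp add: algebra_simps)
  qed
  then show ?thesis by (rule that)
qed

lemma skip_matrix_invariant_iff:
  assumes "invertible (mat 1 - r ** diag_mat (\<chi> j. 1 - \<alpha> $ j))"
  shows "p v* skip_matrix r \<alpha> = p \<longleftrightarrow> (\<exists>q. q v* r = q \<and> p = q v* diag_mat \<alpha>)"
proof -
  define M where "M = mat 1 - r ** diag_mat (\<chi> j. 1 - \<alpha> $ j)"
  have MN: "M ** matrix_inv M = mat 1" and NM: "matrix_inv M ** M = mat 1"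
    using invertible_matrix_inv assms unfolding M_def by blast+
  have skip: "x v* skip_matrix r \<alpha> = ((x v* matrix_inv M) v* r) v* diag_mat \<alpha>" for x
    unfolding skip_matrix_def M_def by (simp add: vector_matrix_mul_assoc)
  have M_nth: "(q v* M) $ j = q $ j - (q v* r) $ j * (1 - \<alpha> $ j)" for q j
    unfolding M_def by (simp add: vector_matrix_mult_diff_rdistrib vector_matrix_mul_assoc[symmetric])
  show ?thesis
  proof
    assume inv: "p v* skip_matrix r \<alpha> = p"
    define q where "q = p v* matrix_inv M"
    have "q v* M = p" using NM by (simp add: q_def vector_matrix_mul_assoc)
    moreover have p: "p = (q v* r) v* diag_mat \<alpha>" using inv by (simp add: skip q_def)
    ultimately have "q $ j - (q v* r) $ j * (1 - \<alpha> $ j) = (q v* r) $ j * \<alpha> $ j" for j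
      using M_nth by (metis vector_matrix_mult_diag_mat_nth)
    then have "q v* r = q" by (simp add: vec_eq_iff algebra_simps)
    with p show "\<exists>q. q v* r = q \<and> p = q v* diag_mat \<alpha>" by auto
  next
    assume "\<exists>q. q v* r = q \<and> p = q v* diag_mat \<alpha>"
    then obtain q where qr: "q v* r = q" and p: "p = q v* diag_mat \<alpha>" by blast
    have "q v* M = p" by (simp add: vec_eq_iff M_nth qr p algebra_simps)
    then have "p v* matrix_inv M = q"
      using MN by (metis vector_matrix_mul_assoc vector_matrix_mul_rid)
    then show "p v* skip_matrix r \<alpha> = p" by (simp add: skip qr p)
  qed
qed

lemma skip_matrix_invariant_iff_scaleR:
  assumes st: "stochastic_matrix r" and sd: "stationary_dist r \<eta>"
    and uniq: "\<forall>p. stationary_dist r p \<longrightarrow> p = \<eta>"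
    and M: "invertible (mat 1 - r ** diag_mat (\<chi> j. 1 - \<alpha> $ j))"
  shows "p v* skip_matrix r \<alpha> = p \<longleftrightarrow> (\<exists>t. p = t *s (\<chi> j. \<eta> $ j * \<alpha> $ j))"
proof -
  have \<eta>_inv: "\<eta> v* r = \<eta>" using sd by (simp add: stationary_dist_def)
  have scaled: "(t *s \<eta>) v* diag_mat \<alpha> = t *s (\<chi> j. \<eta> $ j * \<alpha> $ j)" for t
    by (simp add: vec_eq_iff)
  show ?thesis
    unfolding skip_matrix_invariant_iff[OF M] scaled[symmetric]
  proof
    assume "\<exists>q. q v* r = q \<and> p = q v* diag_mat \<alpha>"
    then obtain q where "q v* r = q" and p: "p = q v* diag_mat \<alpha>" by blast
    then obtain t where "q = t *s \<eta>" using invariant_eq_scaleR_stationary[OF st uniq] by blast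
    with p show "\<exists>t. p = (t *s \<eta>) v* diag_mat \<alpha>" by blast
  next
    assume "\<exists>t. p = (t *s \<eta>) v* diag_mat \<alpha>"
    then obtain t where "p = (t *s \<eta>) v* diag_mat \<alpha>" by blast
    moreover have "(t *s \<eta>) v* r = t *s \<eta>" by (simp add: scalar_vector_matrix_assoc \<eta>_inv)
    ultimately show "\<exists>q. q v* r = q \<and> p = q v* diag_mat \<alpha>" by blast
  qed
qed

theorem theorem2p6:
  fixes r :: "real^'n^'n" and \<eta> :: "real^'n" and \<alpha> :: "real^'n"
  assumes "stochastic_matrix r"
    and "irreducible_chain r"
    and "stationary_dist r \<eta>"
    and "\<forall>p. stationary_dist r p \<longrightarrow> p = \<eta>"
    and "\<forall>j. 0 \<le> \<alpha> $ j \<and> \<alpha> $ j \<le> 1"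
    and "\<alpha> \<noteq> 0"
  shows "invertible (mat 1 - r ** diag_mat (\<chi> j. 1 - \<alpha> $ j))
    \<and> stationary_dist (skip_matrix r \<alpha>)
        ((1 / (\<Sum>j\<in>UNIV. \<eta> $ j * \<alpha> $ j)) *s (\<chi> j. \<eta> $ j * \<alpha> $ j))
    \<and> (\<forall>p. stationary_dist (skip_matrix r \<alpha>) p \<longrightarrow>
          p = (1 / (\<Sum>j\<in>UNIV. \<eta> $ j * \<alpha> $ j)) *s (\<chi> j. \<eta> $ j * \<alpha> $ j))
    \<and> {j. ((1 / (\<Sum>j\<in>UNIV. \<eta> $ j * \<alpha> $ j)) *s (\<chi> j. \<eta> $ j * \<alpha> $ j)) $ j \<noteq> 0}
        = UNIV - {j. \<alpha> $ j = 0}"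
proof -
  note st = assms(1) and irr = assms(2) and sd = assms(3) and uniq = assms(4) and \<alpha> = assms(5)
  define e where "e = (\<chi> j. \<eta> $ j * \<alpha> $ j)"
  define C where "C = (\<Sum>j\<in>UNIV. \<eta> $ j * \<alpha> $ j)"
  have \<eta>_pos: "0 < \<eta> $ j" for j by (rule stationary_dist_pos[OF st irr sd])
  obtain k where "\<alpha> $ k \<noteq> 0" using assms(6) by (auto simp: vec_eq_iff)
  then have "0 < \<alpha> $ k" using \<alpha> by (simp add: order_le_neq_trans)
  have M: "invertible (mat 1 - r ** diag_mat (\<chi> j. 1 - \<alpha> $ j))"
    by (rule invertible_id_minus_mult_diag_mat[OF st irr, of _ k]) (use \<alpha> \<open>0 < \<alpha> $ k\<close> in auto)
  have "0 \<le> \<eta> $ j * \<alpha> $ j" for j using \<eta>_pos[of j] \<alpha> by simp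
  then have C_pos: "0 < C" unfolding C_def
    using sum_pos2[of UNIV k "\<lambda>j. \<eta> $ j * \<alpha> $ j"] \<eta>_pos \<open>0 < \<alpha> $ k\<close> by simp
  have sum_e: "(\<Sum>j\<in>UNIV. (t *s e) $ j) = t * C" for t
    by (simp add: e_def C_def sum_distrib_left)
  have invariant_iff: "p v* skip_matrix r \<alpha> = p \<longleftrightarrow> (\<exists>t. p = t *s e)" for p
    unfolding e_def by (rule skip_matrix_invariant_iff_scaleR[OF st sd uniq M])
  have "prob_vector ((1 / C) *s e)"
    unfolding prob_vector_def sum_e using C_pos \<eta>_pos \<alpha> by (simp add: e_def less_imp_le)
  moreover have "((1 / C) *s e) v* skip_matrix r \<alpha> = (1 / C) *s e"
    unfolding invariant_iff by (intro exI) (rule refl)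
  ultimately have "stationary_dist (skip_matrix r \<alpha>) ((1 / C) *s e)"
    unfolding stationary_dist_def ..
  moreover have "p = (1 / C) *s e" if "stationary_dist (skip_matrix r \<alpha>) p" for p
  proof -
    have "\<exists>t. p = t *s e"
      using that unfolding stationary_dist_def invariant_iff[symmetric] by (rule conjunct2)
    then obtain t where t: "p = t *s e" ..
    then have "t * C = 1"
      using that sum_e unfolding stationary_dist_def prob_vector_def by simp
    then show ?thesis using t C_pos by (simp add: field_simps)
  qed
  moreover have "{j. ((1 / C) *s e) $ j \<noteq> 0} = UNIV - {j. \<alpha> $ j = 0}"
    using C_pos \<eta>_pos by (auto simp: e_def less_imp_neq[symmetric])
  ultimately show ?thesis using M unfolding e_def C_def by blast
qed

end
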